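(* Let $(H,G,\alpha,f)$ and $(H,G,\alpha',f')$ be normalized crossed systems, and write $g\triangleright' h:=\alpha'(g)(h)$. There is a bijection between the set of group homomorphisms $\psi:H\#_\alpha^f G\to H\#_{\alpha'}^{f'}G$ and the set of quadruples $(u,r,v,s)$, where $u:H\to H$, $r:G\to H$, $v:G\to G$ are maps and $s:H\to G$ is a group homomorphism, satisfying for all $g,g_1,g_2\in G$ and $h,h_1,h_2\in H$: (i) $v(g_1)v(g_2)=s(f(g_1,g_2))\,v(g_1g_2)$; (ii) $v(g)s(h)=s(g\triangleright h)\,v(g)$; (iii) $u(h_1h_2)=u(h_1)\big(s(h_1)\triangleright' u(h_2)\big)f'(s(h_1),s(h_2))$; (iv) $u(g\triangleright h)\big(s(g\triangleright h)\triangleright' r(g)\big)f'\big(s(g\triangleright h),v(g)\big)=r(g)\big(v(g)\triangleright' u(h)\big)f'(v(g),s(h))$; (v) $r(g_1)\big(v(g_1)\triangleright' r(g_2)\big)f'(v(g_1),v(g_2))=u(f(g_1,g_2))\big(s(f(g_1,g_2))\triangleright' r(g_1g_2)\big)f'\big(s(f(g_1,g_2)),v(g_1g_2)\big)$. Under this bijection, $\psi$ corresponds to $(u,r,v,s)$ via $$\psi(h,g)=(u(h),s(h))\cdot(r(g),v(g))=\Big(u(h)\big(s(h)\triangleright' r(g)\big)f'(s(h),v(g)),\ s(h)v(g)\Big),$$ and every such quadruple satisfies $u(1)=1$, $v(1)=1$, $r(1)=1$.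
   Context: For groups $H,G$ and a map $\alpha:G\to\mathrm{Aut}(H)$ write $g\triangleright h:=\alpha(g)(h)$. A normalized crossed system is a quadruple $(H,G,\alpha,f)$ with maps $\alpha:G\to\mathrm{Aut}(H)$, $f:G\times G\to H$, $f(1,1)=1$, such that for all $g_1,g_2,g_3\in G$, $h\in H$: (WA) $g_1\triangleright(g_2\triangleright h)=f(g_1,g_2)\big((g_1g_2)\triangleright h\big)f(g_1,g_2)^{-1}$ and (CC) $f(g_1,g_2)f(g_1g_2,g_3)=\big(g_1\triangleright f(g_2,g_3)\big)f(g_1,g_2g_3)$. The crossed product $H\#_\alpha^f G$ is the group on the set $H\times G$ with multiplication $(h_1,g_1)\cdot(h_2,g_2)=\big(h_1(g_1\triangleright h_2)f(g_1,g_2),g_1g_2\big)$ and unit $(1,1)$. *)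

theory Defs
  imports "HOL-Algebra.Group" "HOL-Library.FuncSet"
begin

text \<open>A normalized crossed system (H,G,alpha,f); alpha g h stands for g acting on h,
  f is written curried: f g1 g2 = f(g1,g2).\<close>
definition normalized_crossed_system ::
  "('h, 'x) monoid_scheme \<Rightarrow> ('g, 'y) monoid_scheme \<Rightarrow> ('g \<Rightarrow> 'h \<Rightarrow> 'h) \<Rightarrow> ('g \<Rightarrow> 'g \<Rightarrow> 'h) \<Rightarrow> bool"
where
  "normalized_crossed_system H G \<alpha> f \<longleftrightarrow>
     group H \<and> group G \<and>
     (\<forall>g\<in>carrier G. \<alpha> g \<in> iso H H) \<and>
     (\<forall>g1\<in>carrier G. \<forall>g2\<in>carrier G. f g1 g2 \<in> carrier H) \<and>
     f \<one>\<^bsub>G\<^esub> \<one>\<^bsub>G\<^esub> = \<one>\<^bsub>H\<^esub> \<and>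
     (\<forall>g1\<in>carrier G. \<forall>g2\<in>carrier G. \<forall>h\<in>carrier H.
        \<alpha> g1 (\<alpha> g2 h) = f g1 g2 \<otimes>\<^bsub>H\<^esub> \<alpha> (g1 \<otimes>\<^bsub>G\<^esub> g2) h \<otimes>\<^bsub>H\<^esub> inv\<^bsub>H\<^esub> (f g1 g2)) \<and>
     (\<forall>g1\<in>carrier G. \<forall>g2\<in>carrier G. \<forall>g3\<in>carrier G.
        f g1 g2 \<otimes>\<^bsub>H\<^esub> f (g1 \<otimes>\<^bsub>G\<^esub> g2) g3 = \<alpha> g1 (f g2 g3) \<otimes>\<^bsub>H\<^esub> f g1 (g2 \<otimes>\<^bsub>G\<^esub> g3))"

definition crossed_product ::
  "('h, 'x) monoid_scheme \<Rightarrow> ('g, 'y) monoid_scheme \<Rightarrow> ('g \<Rightarrow> 'h \<Rightarrow> 'h) \<Rightarrow> ('g \<Rightarrow> 'g \<Rightarrow> 'h) \<Rightarrow> ('h \<times> 'g) monoid"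
where
  "crossed_product H G \<alpha> f =
     \<lparr> carrier = carrier H \<times> carrier G,
       mult = (\<lambda>(h1, g1) (h2, g2). (h1 \<otimes>\<^bsub>H\<^esub> \<alpha> g1 h2 \<otimes>\<^bsub>H\<^esub> f g1 g2, g1 \<otimes>\<^bsub>G\<^esub> g2)),
       one = (\<one>\<^bsub>H\<^esub>, \<one>\<^bsub>G\<^esub>) \<rparr>"

text \<open>The quadruples (u,r,v,s) of the corollary: maps on the carriers (extensional, so
  that they are determined by their values on the carriers), s a group homomorphism,
  satisfying conditions (i)--(v).\<close>
definition crossed_quadruple ::
  "('h, 'x) monoid_scheme \<Rightarrow> ('g, 'y) monoid_scheme \<Rightarrow> ('g \<Rightarrow> 'h \<Rightarrow> 'h) \<Rightarrow> ('g \<Rightarrow> 'g \<Rightarrow> 'h)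
   \<Rightarrow> ('g \<Rightarrow> 'h \<Rightarrow> 'h) \<Rightarrow> ('g \<Rightarrow> 'g \<Rightarrow> 'h)
   \<Rightarrow> ('h \<Rightarrow> 'h) \<Rightarrow> ('g \<Rightarrow> 'h) \<Rightarrow> ('g \<Rightarrow> 'g) \<Rightarrow> ('h \<Rightarrow> 'g) \<Rightarrow> bool"
where
  "crossed_quadruple H G \<alpha> f \<alpha>' f' u r v s \<longleftrightarrow>
     u \<in> carrier H \<rightarrow>\<^sub>E carrier H \<and>
     r \<in> carrier G \<rightarrow>\<^sub>E carrier H \<and>
     v \<in> carrier G \<rightarrow>\<^sub>E carrier G \<and>
     s \<in> hom H G \<and> s \<in> extensional (carrier H) \<and>
     (\<forall>g1\<in>carrier G. \<forall>g2\<in>carrier G.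
        v g1 \<otimes>\<^bsub>G\<^esub> v g2 = s (f g1 g2) \<otimes>\<^bsub>G\<^esub> v (g1 \<otimes>\<^bsub>G\<^esub> g2)) \<and>
     (\<forall>g\<in>carrier G. \<forall>h\<in>carrier H.
        v g \<otimes>\<^bsub>G\<^esub> s h = s (\<alpha> g h) \<otimes>\<^bsub>G\<^esub> v g) \<and>
     (\<forall>h1\<in>carrier H. \<forall>h2\<in>carrier H.
        u (h1 \<otimes>\<^bsub>H\<^esub> h2) = u h1 \<otimes>\<^bsub>H\<^esub> \<alpha>' (s h1) (u h2) \<otimes>\<^bsub>H\<^esub> f' (s h1) (s h2)) \<and>
     (\<forall>g\<in>carrier G. \<forall>h\<in>carrier H.
        u (\<alpha> g h) \<otimes>\<^bsub>H\<^esub> \<alpha>' (s (\<alpha> g h)) (r g) \<otimes>\<^bsub>H\<^esub> f' (s (\<alpha> g h)) (v g)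
        = r g \<otimes>\<^bsub>H\<^esub> \<alpha>' (v g) (u h) \<otimes>\<^bsub>H\<^esub> f' (v g) (s h)) \<and>
     (\<forall>g1\<in>carrier G. \<forall>g2\<in>carrier G.
        r g1 \<otimes>\<^bsub>H\<^esub> \<alpha>' (v g1) (r g2) \<otimes>\<^bsub>H\<^esub> f' (v g1) (v g2)
        = u (f g1 g2) \<otimes>\<^bsub>H\<^esub> \<alpha>' (s (f g1 g2)) (r (g1 \<otimes>\<^bsub>G\<^esub> g2))
            \<otimes>\<^bsub>H\<^esub> f' (s (f g1 g2)) (v (g1 \<otimes>\<^bsub>G\<^esub> g2)))"

text \<open>The map sending a quadruple to psi(h,g) = (u h, s h) * (r g, v g) in the target crossed product.\<close>
definition quadruple_to_hom ::
  "('h, 'x) monoid_scheme \<Rightarrow> ('g, 'y) monoid_scheme \<Rightarrow> ('g \<Rightarrow> 'h \<Rightarrow> 'h) \<Rightarrow> ('g \<Rightarrow> 'g \<Rightarrow> 'h)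
   \<Rightarrow> ('h \<Rightarrow> 'h) \<times> ('g \<Rightarrow> 'h) \<times> ('g \<Rightarrow> 'g) \<times> ('h \<Rightarrow> 'g) \<Rightarrow> ('h \<times> 'g \<Rightarrow> 'h \<times> 'g)"
where
  "quadruple_to_hom H G \<alpha>' f' = (\<lambda>(u, r, v, s).
     restrict (\<lambda>(h, g). (u h \<otimes>\<^bsub>H\<^esub> \<alpha>' (s h) (r g) \<otimes>\<^bsub>H\<^esub> f' (s h) (v g), s h \<otimes>\<^bsub>G\<^esub> v g))
              (carrier H \<times> carrier G))"

end

theory Submission
  imports Defs
begin

text \<open>
  Homomorphisms out of a crossed product \<open>H #\<^sub>\<alpha>\<^sup>f G\<close> are governed by a universal property.
  Every element factors as \<open>(h, g) = (h, 1) (1, g)\<close>, and the embedded copies of \<open>H\<close> and \<open>G\<close>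
  satisfy three relations: \<open>(h1, 1) (h2, 1) = (h1 h2, 1)\<close>,
  \<open>(1, g) (h, 1) = (g \<triangleright> h, 1) (1, g)\<close> and \<open>(1, g1) (1, g2) = (f(g1, g2), 1) (1, g1 g2)\<close>.
  We call a pair of maps \<open>P : H \<rightarrow> M\<close>, \<open>Q : G \<rightarrow> M\<close> into a monoid satisfying these relations
  compatible, and show that homomorphisms \<open>\<psi>\<close> from the crossed product to \<open>M\<close> correspond to
  compatible pairs via \<open>\<psi>(h, g) = P h Q g\<close>.

  For the corollary, \<open>M\<close> is a second crossed product \<open>H #\<^sub>\<alpha>\<^sub>'\<^sup>f\<^sup>' G\<close> and
  \<open>P h = (u h, s h)\<close>, \<open>Q g = (r g, v g)\<close>: read componentwise, the three relations are exactly
  conditions (i)--(v) together with multiplicativity of \<open>s\<close>. The bijection is then proved by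
  exhibiting its inverse \<open>\<psi> \<mapsto> (fst \<psi>(-, 1), fst \<psi>(1, -), snd \<psi>(1, -), snd \<psi>(-, 1))\<close>;
  the normalization \<open>u 1 = 1\<close>, \<open>v 1 = 1\<close>, \<open>r 1 = 1\<close> comes from idempotents in a group.
\<close>

lemma crossed_product_carrier [simp]:
  "carrier (crossed_product H G \<alpha> f) = carrier H \<times> carrier G"
  by (simp add: crossed_product_def)

lemma crossed_product_one [simp]:
  "\<one>\<^bsub>crossed_product H G \<alpha> f\<^esub> = (\<one>\<^bsub>H\<^esub>, \<one>\<^bsub>G\<^esub>)"
  by (simp add: crossed_product_def)

lemma crossed_product_mult [simp]:
  "(h1, g1) \<otimes>\<^bsub>crossed_product H G \<alpha> f\<^esub> (h2, g2)
     = (h1 \<otimes>\<^bsub>H\<^esub> \<alpha> g1 h2 \<otimes>\<^bsub>H\<^esub> f g1 g2, g1 \<otimes>\<^bsub>G\<^esub> g2)"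
  by (simp add: crossed_product_def)

lemma group_idempotent_eq_one:
  assumes "group K" "x \<in> carrier K" "x \<otimes>\<^bsub>K\<^esub> x = x"
  shows "x = \<one>\<^bsub>K\<^esub>"
  using assms by (metis group.l_cancel_one' group.is_monoid monoid.m_closed)

locale crossed_system =
  fixes H :: "('h, 'x) monoid_scheme" and G :: "('g, 'y) monoid_scheme"
    and \<alpha> :: "'g \<Rightarrow> 'h \<Rightarrow> 'h" and f :: "'g \<Rightarrow> 'g \<Rightarrow> 'h"
  assumes normalized: "normalized_crossed_system H G \<alpha> f"
begin

sublocale H: group H
  using normalized by (simp add: normalized_crossed_system_def)

sublocale G: group G
  using normalized by (simp add: normalized_crossed_system_def)

lemma action_iso: "g \<in> carrier G \<Longrightarrow> \<alpha> g \<in> iso H H"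
  using normalized by (simp add: normalized_crossed_system_def)

lemma cocycle_closed [simp]:
  "g1 \<in> carrier G \<Longrightarrow> g2 \<in> carrier G \<Longrightarrow> f g1 g2 \<in> carrier H"
  using normalized by (simp add: normalized_crossed_system_def)

lemma cocycle_one_one [simp]: "f \<one>\<^bsub>G\<^esub> \<one>\<^bsub>G\<^esub> = \<one>\<^bsub>H\<^esub>"
  using normalized by (simp add: normalized_crossed_system_def)

lemma twisted_action:
  "g1 \<in> carrier G \<Longrightarrow> g2 \<in> carrier G \<Longrightarrow> h \<in> carrier H \<Longrightarrow>
   \<alpha> g1 (\<alpha> g2 h) = f g1 g2 \<otimes>\<^bsub>H\<^esub> \<alpha> (g1 \<otimes>\<^bsub>G\<^esub> g2) h \<otimes>\<^bsub>H\<^esub> inv\<^bsub>H\<^esub> (f g1 g2)"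
  using normalized by (simp add: normalized_crossed_system_def)

lemma cocycle:
  "g1 \<in> carrier G \<Longrightarrow> g2 \<in> carrier G \<Longrightarrow> g3 \<in> carrier G \<Longrightarrow>
   f g1 g2 \<otimes>\<^bsub>H\<^esub> f (g1 \<otimes>\<^bsub>G\<^esub> g2) g3 = \<alpha> g1 (f g2 g3) \<otimes>\<^bsub>H\<^esub> f g1 (g2 \<otimes>\<^bsub>G\<^esub> g3)"
  using normalized by (simp add: normalized_crossed_system_def)

lemma action_group_hom: "g \<in> carrier G \<Longrightarrow> group_hom H H (\<alpha> g)"
  using action_iso by (simp add: group_hom_def group_hom_axioms_def iso_def H.group_axioms)

lemma action_closed [simp]: "g \<in> carrier G \<Longrightarrow> h \<in> carrier H \<Longrightarrow> \<alpha> g h \<in> carrier H"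
  using group_hom.hom_closed[OF action_group_hom] by blast

lemma action_mult [simp]:
  "g \<in> carrier G \<Longrightarrow> h1 \<in> carrier H \<Longrightarrow> h2 \<in> carrier H \<Longrightarrow>
   \<alpha> g (h1 \<otimes>\<^bsub>H\<^esub> h2) = \<alpha> g h1 \<otimes>\<^bsub>H\<^esub> \<alpha> g h2"
  using group_hom.hom_mult[OF action_group_hom] by blast

lemma action_one [simp]: "g \<in> carrier G \<Longrightarrow> \<alpha> g \<one>\<^bsub>H\<^esub> = \<one>\<^bsub>H\<^esub>"
  using group_hom.hom_one[OF action_group_hom] by blast

lemma action_inj:
  "g \<in> carrier G \<Longrightarrow> x \<in> carrier H \<Longrightarrow> y \<in> carrier H \<Longrightarrow> \<alpha> g x = \<alpha> g y \<Longrightarrow> x = y"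
  using action_iso by (auto simp: iso_def bij_betw_def inj_on_def)

text \<open>Normalization propagates: the cocycle is trivial as soon as one argument is the unit,
  and the unit of \<open>G\<close> acts trivially. Each follows from (CC) or (WA) with two units inserted.\<close>
lemma cocycle_one_left [simp]:
  assumes g: "g \<in> carrier G"
  shows "f \<one>\<^bsub>G\<^esub> g = \<one>\<^bsub>H\<^esub>"
proof -
  have "\<one>\<^bsub>H\<^esub> \<otimes>\<^bsub>H\<^esub> f \<one>\<^bsub>G\<^esub> g = \<alpha> \<one>\<^bsub>G\<^esub> (f \<one>\<^bsub>G\<^esub> g) \<otimes>\<^bsub>H\<^esub> f \<one>\<^bsub>G\<^esub> g"
    using cocycle[of "\<one>\<^bsub>G\<^esub>" "\<one>\<^bsub>G\<^esub>" g] g by simp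
  then have "\<alpha> \<one>\<^bsub>G\<^esub> (f \<one>\<^bsub>G\<^esub> g) = \<alpha> \<one>\<^bsub>G\<^esub> \<one>\<^bsub>H\<^esub>"
    using g H.right_cancel by simp
  then show ?thesis
    using action_inj[of "\<one>\<^bsub>G\<^esub>"] g by simp
qed

lemma cocycle_one_right [simp]:
  assumes g: "g \<in> carrier G"
  shows "f g \<one>\<^bsub>G\<^esub> = \<one>\<^bsub>H\<^esub>"
proof -
  have "f g \<one>\<^bsub>G\<^esub> \<otimes>\<^bsub>H\<^esub> f g \<one>\<^bsub>G\<^esub> = f g \<one>\<^bsub>G\<^esub>"
    using cocycle[of g "\<one>\<^bsub>G\<^esub>" "\<one>\<^bsub>G\<^esub>"] g by simp
  then show ?thesis
    using group_idempotent_eq_one[OF H.group_axioms] g by simp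
qed

lemma action_unit [simp]:
  assumes h: "h \<in> carrier H"
  shows "\<alpha> \<one>\<^bsub>G\<^esub> h = h"
proof -
  have "\<alpha> \<one>\<^bsub>G\<^esub> (\<alpha> \<one>\<^bsub>G\<^esub> h) = \<alpha> \<one>\<^bsub>G\<^esub> h"
    using twisted_action[of "\<one>\<^bsub>G\<^esub>" "\<one>\<^bsub>G\<^esub>" h] h by simp
  then show ?thesis
    using action_inj[of "\<one>\<^bsub>G\<^esub>" "\<alpha> \<one>\<^bsub>G\<^esub> h" h] h by simp
qed

text \<open>The associativity of the crossed product, written out in \<open>H\<close>; it follows by expanding
  the action and rewriting with (WA) and (CC).\<close>
lemma crossed_product_assoc_component:
  assumes "h1 \<in> carrier H" "h2 \<in> carrier H" "h3 \<in> carrier H"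
    and "g1 \<in> carrier G" "g2 \<in> carrier G" "g3 \<in> carrier G"
  shows "h1 \<otimes>\<^bsub>H\<^esub> \<alpha> g1 h2 \<otimes>\<^bsub>H\<^esub> f g1 g2 \<otimes>\<^bsub>H\<^esub> \<alpha> (g1 \<otimes>\<^bsub>G\<^esub> g2) h3 \<otimes>\<^bsub>H\<^esub> f (g1 \<otimes>\<^bsub>G\<^esub> g2) g3
       = h1 \<otimes>\<^bsub>H\<^esub> \<alpha> g1 (h2 \<otimes>\<^bsub>H\<^esub> \<alpha> g2 h3 \<otimes>\<^bsub>H\<^esub> f g2 g3) \<otimes>\<^bsub>H\<^esub> f g1 (g2 \<otimes>\<^bsub>G\<^esub> g3)"
proof -
  have "h1 \<otimes>\<^bsub>H\<^esub> \<alpha> g1 (h2 \<otimes>\<^bsub>H\<^esub> \<alpha> g2 h3 \<otimes>\<^bsub>H\<^esub> f g2 g3) \<otimes>\<^bsub>H\<^esub> f g1 (g2 \<otimes>\<^bsub>G\<^esub> g3)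
     = h1 \<otimes>\<^bsub>H\<^esub> (\<alpha> g1 h2 \<otimes>\<^bsub>H\<^esub> (\<alpha> g1 (\<alpha> g2 h3) \<otimes>\<^bsub>H\<^esub> (\<alpha> g1 (f g2 g3) \<otimes>\<^bsub>H\<^esub> f g1 (g2 \<otimes>\<^bsub>G\<^esub> g3))))"
    using assms by (simp add: H.m_assoc)
  also have "\<dots> = h1 \<otimes>\<^bsub>H\<^esub> (\<alpha> g1 h2 \<otimes>\<^bsub>H\<^esub> ((f g1 g2 \<otimes>\<^bsub>H\<^esub> \<alpha> (g1 \<otimes>\<^bsub>G\<^esub> g2) h3 \<otimes>\<^bsub>H\<^esub> inv\<^bsub>H\<^esub> (f g1 g2))
                   \<otimes>\<^bsub>H\<^esub> (f g1 g2 \<otimes>\<^bsub>H\<^esub> f (g1 \<otimes>\<^bsub>G\<^esub> g2) g3)))"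
    using assms by (simp add: twisted_action cocycle)
  also have "\<dots> = h1 \<otimes>\<^bsub>H\<^esub> \<alpha> g1 h2 \<otimes>\<^bsub>H\<^esub> f g1 g2 \<otimes>\<^bsub>H\<^esub> \<alpha> (g1 \<otimes>\<^bsub>G\<^esub> g2) h3
                   \<otimes>\<^bsub>H\<^esub> (inv\<^bsub>H\<^esub> (f g1 g2) \<otimes>\<^bsub>H\<^esub> f g1 g2) \<otimes>\<^bsub>H\<^esub> f (g1 \<otimes>\<^bsub>G\<^esub> g2) g3"
    using assms by (simp add: H.m_assoc H.inv_solve_left' del: H.l_inv)
  finally show ?thesis
    using assms by simp
qed

lemma crossed_product_monoid: "monoid (crossed_product H G \<alpha> f)"
proof (rule monoidI)
  fix x y z
  assume "x \<in> carrier (crossed_product H G \<alpha> f)" "y \<in> carrier (crossed_product H G \<alpha> f)"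
    "z \<in> carrier (crossed_product H G \<alpha> f)"
  then show "x \<otimes>\<^bsub>crossed_product H G \<alpha> f\<^esub> y \<otimes>\<^bsub>crossed_product H G \<alpha> f\<^esub> z =
             x \<otimes>\<^bsub>crossed_product H G \<alpha> f\<^esub> (y \<otimes>\<^bsub>crossed_product H G \<alpha> f\<^esub> z)"
    by (auto simp: crossed_product_assoc_component G.m_assoc)
qed auto

text \<open>A pair of maps \<open>P : H \<rightarrow> M\<close>, \<open>Q : G \<rightarrow> M\<close> into a monoid \<open>M\<close> is compatible if it satisfies
  the defining relations of the crossed product: \<open>P\<close> is multiplicative, \<open>Q\<close> conjugates \<open>P\<close>
  through the action, and \<open>Q\<close> is multiplicative up to the cocycle.\<close>
definition compatible_pair :: "('m, 'z) monoid_scheme \<Rightarrow> ('h \<Rightarrow> 'm) \<Rightarrow> ('g \<Rightarrow> 'm) \<Rightarrow> bool"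
  where "compatible_pair M P Q \<longleftrightarrow>
    P \<in> carrier H \<rightarrow> carrier M \<and> Q \<in> carrier G \<rightarrow> carrier M \<and>
    (\<forall>h1\<in>carrier H. \<forall>h2\<in>carrier H. P h1 \<otimes>\<^bsub>M\<^esub> P h2 = P (h1 \<otimes>\<^bsub>H\<^esub> h2)) \<and>
    (\<forall>g\<in>carrier G. \<forall>h\<in>carrier H. Q g \<otimes>\<^bsub>M\<^esub> P h = P (\<alpha> g h) \<otimes>\<^bsub>M\<^esub> Q g) \<and>
    (\<forall>g1\<in>carrier G. \<forall>g2\<in>carrier G. Q g1 \<otimes>\<^bsub>M\<^esub> Q g2 = P (f g1 g2) \<otimes>\<^bsub>M\<^esub> Q (g1 \<otimes>\<^bsub>G\<^esub> g2))"

lemma crossed_product_compatible: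
  "compatible_pair (crossed_product H G \<alpha> f) (\<lambda>h. (h, \<one>\<^bsub>G\<^esub>)) (\<lambda>g. (\<one>\<^bsub>H\<^esub>, g))"
  by (simp add: compatible_pair_def)

lemma hom_compatible:
  assumes "\<psi> \<in> hom (crossed_product H G \<alpha> f) M"
  shows "compatible_pair M (\<lambda>h. \<psi> (h, \<one>\<^bsub>G\<^esub>)) (\<lambda>g. \<psi> (\<one>\<^bsub>H\<^esub>, g))"
proof -
  have mult: "\<psi> x \<otimes>\<^bsub>M\<^esub> \<psi> y = \<psi> (x \<otimes>\<^bsub>crossed_product H G \<alpha> f\<^esub> y)"
    if "x \<in> carrier H \<times> carrier G" "y \<in> carrier H \<times> carrier G" for x y
    using assms that by (simp add: hom_mult)
  show ?thesis
    using crossed_product_compatible assms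
    by (auto simp: compatible_pair_def hom_def mult)
qed

text \<open>Conversely (universal property), a compatible pair \<open>(P, Q)\<close> into a monoid \<open>M\<close> extends
  to the homomorphism \<open>(h, g) \<mapsto> P h Q g\<close>: the relations suffice to reorder any product
  \<open>P h1 Q g1 P h2 Q g2\<close> into the form \<open>P h Q g\<close>.\<close>
lemma compatible_hom:
  assumes M: "monoid M" and PQ: "compatible_pair M P Q"
  shows "(\<lambda>(h, g) \<in> carrier H \<times> carrier G. P h \<otimes>\<^bsub>M\<^esub> Q g) \<in> hom (crossed_product H G \<alpha> f) M"
proof -
  interpret M: monoid M by (rule M)
  have P: "P h \<in> carrier M" if "h \<in> carrier H" for h
    using PQ that by (auto simp: compatible_pair_def)
  have Q: "Q g \<in> carrier M" if "g \<in> carrier G" for g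
    using PQ that by (auto simp: compatible_pair_def)
  have PP: "P h1 \<otimes>\<^bsub>M\<^esub> P h2 = P (h1 \<otimes>\<^bsub>H\<^esub> h2)" if "h1 \<in> carrier H" "h2 \<in> carrier H" for h1 h2
    using PQ that by (simp add: compatible_pair_def)
  have QP: "Q g \<otimes>\<^bsub>M\<^esub> P h = P (\<alpha> g h) \<otimes>\<^bsub>M\<^esub> Q g" if "g \<in> carrier G" "h \<in> carrier H" for g h
    using PQ that by (simp add: compatible_pair_def)
  have QQ: "Q g1 \<otimes>\<^bsub>M\<^esub> Q g2 = P (f g1 g2) \<otimes>\<^bsub>M\<^esub> Q (g1 \<otimes>\<^bsub>G\<^esub> g2)"
    if "g1 \<in> carrier G" "g2 \<in> carrier G" for g1 g2
    using PQ that by (simp add: compatible_pair_def)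
  have reorder: "P h1 \<otimes>\<^bsub>M\<^esub> Q g1 \<otimes>\<^bsub>M\<^esub> (P h2 \<otimes>\<^bsub>M\<^esub> Q g2)
      = P (h1 \<otimes>\<^bsub>H\<^esub> \<alpha> g1 h2 \<otimes>\<^bsub>H\<^esub> f g1 g2) \<otimes>\<^bsub>M\<^esub> Q (g1 \<otimes>\<^bsub>G\<^esub> g2)"
    if "h1 \<in> carrier H" "g1 \<in> carrier G" "h2 \<in> carrier H" "g2 \<in> carrier G" for h1 g1 h2 g2
  proof -
    have "P h1 \<otimes>\<^bsub>M\<^esub> Q g1 \<otimes>\<^bsub>M\<^esub> (P h2 \<otimes>\<^bsub>M\<^esub> Q g2) = P h1 \<otimes>\<^bsub>M\<^esub> (Q g1 \<otimes>\<^bsub>M\<^esub> P h2) \<otimes>\<^bsub>M\<^esub> Q g2"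
      using that by (simp add: M.m_assoc P Q)
    also have "\<dots> = P h1 \<otimes>\<^bsub>M\<^esub> P (\<alpha> g1 h2) \<otimes>\<^bsub>M\<^esub> (Q g1 \<otimes>\<^bsub>M\<^esub> Q g2)"
      using that by (simp add: QP M.m_assoc P Q)
    also have "\<dots> = P h1 \<otimes>\<^bsub>M\<^esub> P (\<alpha> g1 h2) \<otimes>\<^bsub>M\<^esub> P (f g1 g2) \<otimes>\<^bsub>M\<^esub> Q (g1 \<otimes>\<^bsub>G\<^esub> g2)"
      using that by (simp add: QQ M.m_assoc P Q)
    also have "\<dots> = P (h1 \<otimes>\<^bsub>H\<^esub> \<alpha> g1 h2 \<otimes>\<^bsub>H\<^esub> f g1 g2) \<otimes>\<^bsub>M\<^esub> Q (g1 \<otimes>\<^bsub>G\<^esub> g2)"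
      using that by (simp add: PP)
    finally show ?thesis .
  qed
  show ?thesis
    by (rule homI) (auto simp: P Q reorder)
qed

lemma compatible_pair_cong:
  assumes "\<And>h. h \<in> carrier H \<Longrightarrow> P h = P' h" and "\<And>g. g \<in> carrier G \<Longrightarrow> Q g = Q' g"
  shows "compatible_pair M P Q \<longleftrightarrow> compatible_pair M P' Q'"
  using assms by (simp add: compatible_pair_def Pi_def)

end

locale crossed_system_pair = S: crossed_system H G \<alpha> f + T: crossed_system H G \<alpha>' f'
  for H :: "('h, 'x) monoid_scheme" and G :: "('g, 'y) monoid_scheme"
    and \<alpha> :: "'g \<Rightarrow> 'h \<Rightarrow> 'h" and f :: "'g \<Rightarrow> 'g \<Rightarrow> 'h"
    and \<alpha>' :: "'g \<Rightarrow> 'h \<Rightarrow> 'h" and f' :: "'g \<Rightarrow> 'g \<Rightarrow> 'h"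
begin

text \<open>The two sides of the bijection: the admissible quadruples, and the homomorphisms between
  the crossed products (taken extensional, so that they are determined by their values on
  the carrier).\<close>
abbreviation quadruples :: "(('h \<Rightarrow> 'h) \<times> ('g \<Rightarrow> 'h) \<times> ('g \<Rightarrow> 'g) \<times> ('h \<Rightarrow> 'g)) set"
  where "quadruples \<equiv> {(u, r, v, s). crossed_quadruple H G \<alpha> f \<alpha>' f' u r v s}"

abbreviation crossed_homs :: "('h \<times> 'g \<Rightarrow> 'h \<times> 'g) set"
  where "crossed_homs \<equiv> hom (crossed_product H G \<alpha> f) (crossed_product H G \<alpha>' f')
                          \<inter> extensional (carrier H \<times> carrier G)"

text \<open>Conditions (i)--(v), together with \<open>s\<close> being a homomorphism, say exactly that
  \<open>h \<mapsto> (u h, s h)\<close> and \<open>g \<mapsto> (r g, v g)\<close> form a compatible pair in the target crossed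
  product: (iii) and multiplicativity of \<open>s\<close> are the first relation, (iv) and (ii) the
  second, (v) and (i) the third, read componentwise.\<close>
lemma crossed_quadruple_iff_compatible:
  "crossed_quadruple H G \<alpha> f \<alpha>' f' u r v s \<longleftrightarrow>
     u \<in> carrier H \<rightarrow>\<^sub>E carrier H \<and> r \<in> carrier G \<rightarrow>\<^sub>E carrier H \<and>
     v \<in> carrier G \<rightarrow>\<^sub>E carrier G \<and> s \<in> carrier H \<rightarrow>\<^sub>E carrier G \<and>
     S.compatible_pair (crossed_product H G \<alpha>' f') (\<lambda>h. (u h, s h)) (\<lambda>g. (r g, v g))"
  unfolding crossed_quadruple_def S.compatible_pair_def
  by (auto simp: hom_def PiE_def Pi_def)

lemma crossed_quadruple_closed:
  assumes q: "crossed_quadruple H G \<alpha> f \<alpha>' f' u r v s"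
  shows "h \<in> carrier H \<Longrightarrow> u h \<in> carrier H" and "h \<in> carrier H \<Longrightarrow> s h \<in> carrier G"
    and "g \<in> carrier G \<Longrightarrow> r g \<in> carrier H" and "g \<in> carrier G \<Longrightarrow> v g \<in> carrier G"
  using q unfolding crossed_quadruple_def hom_def by (blast intro: PiE_mem)+

text \<open>Every quadruple is normalized: \<open>u 1\<close>, \<open>v 1\<close>, \<open>r 1\<close> are idempotents, by (iii), (i) and (v)
  evaluated at units.\<close>
lemma crossed_quadruple_units:
  assumes q: "crossed_quadruple H G \<alpha> f \<alpha>' f' u r v s"
  shows "u \<one>\<^bsub>H\<^esub> = \<one>\<^bsub>H\<^esub>" and "v \<one>\<^bsub>G\<^esub> = \<one>\<^bsub>G\<^esub>" and "r \<one>\<^bsub>G\<^esub> = \<one>\<^bsub>H\<^esub>"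
proof -
  have s: "s \<in> hom H G"
    using q unfolding crossed_quadruple_def by blast
  have u: "u \<one>\<^bsub>H\<^esub> \<in> carrier H" and v: "v \<one>\<^bsub>G\<^esub> \<in> carrier G" and r: "r \<one>\<^bsub>G\<^esub> \<in> carrier H"
    using crossed_quadruple_closed[OF q] by simp_all
  have s_one [simp]: "s \<one>\<^bsub>H\<^esub> = \<one>\<^bsub>G\<^esub>"
    using hom_one[OF s S.H.group_axioms S.G.group_axioms] .
  have cond_i: "v \<one>\<^bsub>G\<^esub> \<otimes>\<^bsub>G\<^esub> v \<one>\<^bsub>G\<^esub> = s (f \<one>\<^bsub>G\<^esub> \<one>\<^bsub>G\<^esub>) \<otimes>\<^bsub>G\<^esub> v (\<one>\<^bsub>G\<^esub> \<otimes>\<^bsub>G\<^esub> \<one>\<^bsub>G\<^esub>)"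
    and cond_iii: "u (\<one>\<^bsub>H\<^esub> \<otimes>\<^bsub>H\<^esub> \<one>\<^bsub>H\<^esub>)
      = u \<one>\<^bsub>H\<^esub> \<otimes>\<^bsub>H\<^esub> \<alpha>' (s \<one>\<^bsub>H\<^esub>) (u \<one>\<^bsub>H\<^esub>) \<otimes>\<^bsub>H\<^esub> f' (s \<one>\<^bsub>H\<^esub>) (s \<one>\<^bsub>H\<^esub>)"
    and cond_v: "r \<one>\<^bsub>G\<^esub> \<otimes>\<^bsub>H\<^esub> \<alpha>' (v \<one>\<^bsub>G\<^esub>) (r \<one>\<^bsub>G\<^esub>) \<otimes>\<^bsub>H\<^esub> f' (v \<one>\<^bsub>G\<^esub>) (v \<one>\<^bsub>G\<^esub>)
      = u (f \<one>\<^bsub>G\<^esub> \<one>\<^bsub>G\<^esub>) \<otimes>\<^bsub>H\<^esub> \<alpha>' (s (f \<one>\<^bsub>G\<^esub> \<one>\<^bsub>G\<^esub>)) (r (\<one>\<^bsub>G\<^esub> \<otimes>\<^bsub>G\<^esub> \<one>\<^bsub>G\<^esub>))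
        \<otimes>\<^bsub>H\<^esub> f' (s (f \<one>\<^bsub>G\<^esub> \<one>\<^bsub>G\<^esub>)) (v (\<one>\<^bsub>G\<^esub> \<otimes>\<^bsub>G\<^esub> \<one>\<^bsub>G\<^esub>))"
    using q unfolding crossed_quadruple_def by blast+
  show u_one: "u \<one>\<^bsub>H\<^esub> = \<one>\<^bsub>H\<^esub>"
    by (rule group_idempotent_eq_one[OF S.H.group_axioms u]) (use cond_iii u in simp)
  show v_one: "v \<one>\<^bsub>G\<^esub> = \<one>\<^bsub>G\<^esub>"
    by (rule group_idempotent_eq_one[OF S.G.group_axioms v]) (use cond_i v in simp)
  show "r \<one>\<^bsub>G\<^esub> = \<one>\<^bsub>H\<^esub>"
    by (rule group_idempotent_eq_one[OF S.H.group_axioms r]) (use cond_v r u_one v_one in simp)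
qed

lemma quadruple_to_hom_on_H:
  assumes q: "crossed_quadruple H G \<alpha> f \<alpha>' f' u r v s" and h: "h \<in> carrier H"
  shows "quadruple_to_hom H G \<alpha>' f' (u, r, v, s) (h, \<one>\<^bsub>G\<^esub>) = (u h, s h)"
proof -
  have "u h \<in> carrier H" "s h \<in> carrier G"
    using crossed_quadruple_closed[OF q] h by simp_all
  then show ?thesis
    using h by (simp add: quadruple_to_hom_def crossed_quadruple_units[OF q])
qed

lemma quadruple_to_hom_on_G:
  assumes q: "crossed_quadruple H G \<alpha> f \<alpha>' f' u r v s" and g: "g \<in> carrier G"
  shows "quadruple_to_hom H G \<alpha>' f' (u, r, v, s) (\<one>\<^bsub>H\<^esub>, g) = (r g, v g)"
proof -
  have "r g \<in> carrier H" "v g \<in> carrier G"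
    using crossed_quadruple_closed[OF q] g by simp_all
  moreover have "s \<one>\<^bsub>H\<^esub> = \<one>\<^bsub>G\<^esub>"
    using q hom_one[of s H G] S.H.group_axioms S.G.group_axioms
    unfolding crossed_quadruple_def by blast
  ultimately show ?thesis
    using g by (simp add: quadruple_to_hom_def crossed_quadruple_units[OF q])
qed

definition hom_to_quadruple ::
  "('h \<times> 'g \<Rightarrow> 'h \<times> 'g) \<Rightarrow> ('h \<Rightarrow> 'h) \<times> ('g \<Rightarrow> 'h) \<times> ('g \<Rightarrow> 'g) \<times> ('h \<Rightarrow> 'g)"
  where "hom_to_quadruple \<psi> =
    ((\<lambda>h \<in> carrier H. fst (\<psi> (h, \<one>\<^bsub>G\<^esub>))), (\<lambda>g \<in> carrier G. fst (\<psi> (\<one>\<^bsub>H\<^esub>, g))),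
     (\<lambda>g \<in> carrier G. snd (\<psi> (\<one>\<^bsub>H\<^esub>, g))), (\<lambda>h \<in> carrier H. snd (\<psi> (h, \<one>\<^bsub>G\<^esub>))))"

lemma quadruple_to_hom_hom:
  assumes "q \<in> quadruples"
  shows "quadruple_to_hom H G \<alpha>' f' q \<in> crossed_homs"
proof -
  obtain u r v s where q: "q = (u, r, v, s)" and quad: "crossed_quadruple H G \<alpha> f \<alpha>' f' u r v s"
    using assms by auto
  have "S.compatible_pair (crossed_product H G \<alpha>' f') (\<lambda>h. (u h, s h)) (\<lambda>g. (r g, v g))"
    using quad crossed_quadruple_iff_compatible by blast
  from S.compatible_hom[OF T.crossed_product_monoid this] show ?thesis
    by (simp add: q quadruple_to_hom_def)
qed

lemma hom_to_quadruple_quadruple: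
  assumes \<psi>: "\<psi> \<in> hom (crossed_product H G \<alpha> f) (crossed_product H G \<alpha>' f')"
  shows "hom_to_quadruple \<psi> \<in> quadruples"
proof -
  have closed: "\<psi> x \<in> carrier H \<times> carrier G" if "x \<in> carrier H \<times> carrier G" for x
    using \<psi> that by (auto simp: hom_def)
  have "S.compatible_pair (crossed_product H G \<alpha>' f') (\<lambda>h. \<psi> (h, \<one>\<^bsub>G\<^esub>)) (\<lambda>g. \<psi> (\<one>\<^bsub>H\<^esub>, g))"
    using S.hom_compatible[OF \<psi>] .
  then have "S.compatible_pair (crossed_product H G \<alpha>' f')
      (\<lambda>h. ((\<lambda>h \<in> carrier H. fst (\<psi> (h, \<one>\<^bsub>G\<^esub>))) h, (\<lambda>h \<in> carrier H. snd (\<psi> (h, \<one>\<^bsub>G\<^esub>))) h))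
      (\<lambda>g. ((\<lambda>g \<in> carrier G. fst (\<psi> (\<one>\<^bsub>H\<^esub>, g))) g, (\<lambda>g \<in> carrier G. snd (\<psi> (\<one>\<^bsub>H\<^esub>, g))) g))"
    by (subst S.compatible_pair_cong) simp_all
  moreover have "(\<lambda>h \<in> carrier H. fst (\<psi> (h, \<one>\<^bsub>G\<^esub>))) \<in> carrier H \<rightarrow>\<^sub>E carrier H"
    "(\<lambda>g \<in> carrier G. fst (\<psi> (\<one>\<^bsub>H\<^esub>, g))) \<in> carrier G \<rightarrow>\<^sub>E carrier H"
    "(\<lambda>g \<in> carrier G. snd (\<psi> (\<one>\<^bsub>H\<^esub>, g))) \<in> carrier G \<rightarrow>\<^sub>E carrier G"
    "(\<lambda>h \<in> carrier H. snd (\<psi> (h, \<one>\<^bsub>G\<^esub>))) \<in> carrier H \<rightarrow>\<^sub>E carrier G"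
    using closed by (auto simp: mem_Times_iff)
  ultimately show ?thesis
    by (simp add: hom_to_quadruple_def crossed_quadruple_iff_compatible)
qed

lemma hom_to_quadruple_quadruple_to_hom:
  assumes "q \<in> quadruples"
  shows "hom_to_quadruple (quadruple_to_hom H G \<alpha>' f' q) = q"
proof -
  obtain u r v s where q: "q = (u, r, v, s)" and quad: "crossed_quadruple H G \<alpha> f \<alpha>' f' u r v s"
    using assms by auto
  have ext: "u \<in> extensional (carrier H)" "r \<in> extensional (carrier G)"
    "v \<in> extensional (carrier G)" "s \<in> extensional (carrier H)"
    using quad unfolding crossed_quadruple_def PiE_def by blast+
  show ?thesis
    unfolding q hom_to_quadruple_def prod.inject
    by (intro conjI extensionalityI[OF restrict_extensional])
      (simp_all add: ext quadruple_to_hom_on_H[OF quad] quadruple_to_hom_on_G[OF quad])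
qed

text \<open>Conversely, a homomorphism is determined by its quadruple, because every element of the
  crossed product factors as \<open>(h, 1) (1, g)\<close>.\<close>
lemma quadruple_to_hom_hom_to_quadruple:
  assumes "\<psi> \<in> crossed_homs"
  shows "quadruple_to_hom H G \<alpha>' f' (hom_to_quadruple \<psi>) = \<psi>"
proof (rule extensionalityI[of _ "carrier H \<times> carrier G"])
  show "quadruple_to_hom H G \<alpha>' f' (hom_to_quadruple \<psi>) \<in> extensional (carrier H \<times> carrier G)"
    by (simp add: hom_to_quadruple_def quadruple_to_hom_def)
  show "\<psi> \<in> extensional (carrier H \<times> carrier G)"
    using assms by simp
  fix x assume "x \<in> carrier H \<times> carrier G"
  then obtain h g where x: "x = (h, g)" and h: "h \<in> carrier H" and g: "g \<in> carrier G"
    by auto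
  have "quadruple_to_hom H G \<alpha>' f' (hom_to_quadruple \<psi>) (h, g)
      = \<psi> (h, \<one>\<^bsub>G\<^esub>) \<otimes>\<^bsub>crossed_product H G \<alpha>' f'\<^esub> \<psi> (\<one>\<^bsub>H\<^esub>, g)"
    using h g by (simp add: hom_to_quadruple_def quadruple_to_hom_def crossed_product_def case_prod_beta)
  also have "\<dots> = \<psi> ((h, \<one>\<^bsub>G\<^esub>) \<otimes>\<^bsub>crossed_product H G \<alpha> f\<^esub> (\<one>\<^bsub>H\<^esub>, g))"
    using assms h g by (intro hom_mult[symmetric]) auto
  also have "\<dots> = \<psi> (h, g)"
    using h g by simp
  finally show "quadruple_to_hom H G \<alpha>' f' (hom_to_quadruple \<psi>) x = \<psi> x"
    by (simp add: x)
qed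

end

theorem corollary2p3:
  fixes H :: "'h monoid" and G :: "'g monoid"
    and \<alpha> \<alpha>' :: "'g \<Rightarrow> 'h \<Rightarrow> 'h" and f f' :: "'g \<Rightarrow> 'g \<Rightarrow> 'h"
  assumes "normalized_crossed_system H G \<alpha> f"
    and "normalized_crossed_system H G \<alpha>' f'"
  shows "bij_betw (quadruple_to_hom H G \<alpha>' f')
           {(u, r, v, s). crossed_quadruple H G \<alpha> f \<alpha>' f' u r v s}
           (hom (crossed_product H G \<alpha> f) (crossed_product H G \<alpha>' f')
              \<inter> extensional (carrier H \<times> carrier G))
       \<and> (\<forall>u r v s. crossed_quadruple H G \<alpha> f \<alpha>' f' u r v s \<longrightarrow>
            u \<one>\<^bsub>H\<^esub> = \<one>\<^bsub>H\<^esub> \<and> v \<one>\<^bsub>G\<^esub> = \<one>\<^bsub>G\<^esub> \<and> r \<one>\<^bsub>G\<^esub> = \<one>\<^bsub>H\<^esub>)"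
proof -
  interpret crossed_system_pair H G \<alpha> f \<alpha>' f'
    using assms by (simp add: crossed_system_pair_def crossed_system_def)
  have "bij_betw (quadruple_to_hom H G \<alpha>' f') quadruples crossed_homs"
  proof (rule bij_betw_byWitness[where f' = hom_to_quadruple])
    show "\<forall>q \<in> quadruples. hom_to_quadruple (quadruple_to_hom H G \<alpha>' f' q) = q"
      using hom_to_quadruple_quadruple_to_hom by (rule ballI)
    show "\<forall>\<psi> \<in> crossed_homs. quadruple_to_hom H G \<alpha>' f' (hom_to_quadruple \<psi>) = \<psi>"
      using quadruple_to_hom_hom_to_quadruple by (rule ballI)
    show "quadruple_to_hom H G \<alpha>' f' ` quadruples \<subseteq> crossed_homs"
      using quadruple_to_hom_hom by (rule image_subsetI)
    show "hom_to_quadruple ` crossed_homs \<subseteq> quadruples"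
      by (rule image_subsetI, rule hom_to_quadruple_quadruple) simp
  qed
  moreover have "\<forall>u r v s. crossed_quadruple H G \<alpha> f \<alpha>' f' u r v s \<longrightarrow>
      u \<one>\<^bsub>H\<^esub> = \<one>\<^bsub>H\<^esub> \<and> v \<one>\<^bsub>G\<^esub> = \<one>\<^bsub>G\<^esub> \<and> r \<one>\<^bsub>G\<^esub> = \<one>\<^bsub>H\<^esub>"
    using crossed_quadruple_units by metis
  ultimately show ?thesis
    by (rule conjI)
qed

end
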